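(* Let $(H,B_1,B_2)$ be a Rota-Baxter system of Hopf algebras with descendent operation $\circ$ and cocycle $\sigma$, and let $H_1=\operatorname{Im}(\sigma)$. Define $T:H_1\to H_1$ by $T(a)=S(B_1(a_1))B_2(a_2)$ for $a\in H_1$. Then $H_{B_1,B_2}=(H_1,\circ_1,1,\Delta_1,\epsilon_1,T)$ is a cocommutative Hopf algebra, where $\circ_1,\Delta_1,\epsilon_1$ denote the restrictions of $\circ,\Delta,\epsilon$ to $H_1$.
   Context: $\mathbb{F}$ is a field of characteristic $0$; all vector spaces, algebras, coalgebras, Hopf algebras are over $\mathbb{F}$. Sweedler notation $\Delta(a)=a_1\otimes a_2$ (iterated: $a_1\otimes a_2\otimes a_3$, etc.) is used. A coalgebra homomorphism $f$ satisfies $\Delta(f(a))=f(a_1)\otimes f(a_2)$ and $\epsilon(f(a))=\epsilon(a)$. A Rota-Baxter system of Hopf algebras is a triple $(H,B_1,B_2)$ where $(H,\cdot,1,\Delta,\epsilon,S)$ is a cocommutative Hopf algebra and $B_1,B_2:H\to H$ are coalgebra homomorphisms with $B_1(1)=B_2(1)=1$ such that for all $a,b\in H$: $B_1(a)B_1(b)=B_1(B_1(a_1)\,b\,S(B_2(a_2)))$ and $B_2(a)B_2(b)=B_2(B_1(a_1)\,b\,S(B_2(a_2)))$. Its descendent operation is $a\circ b=B_1(a_1)\,b\,S(B_2(a_2))$ and its cocycle is $\sigma(a)=B_1(a_1)S(B_2(a_2))$, $a,b\in H$. *)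

theory Defs
  imports Complex_Main
begin

text \<open>
  Elements of tensor powers A (x) A and A (x) A (x) A of a subspace A are represented
  by finite lists of pairs / triples (the formal sums  sum_i x_i (x) y_i), and two such
  representations denote the same tensor iff every bilinear (trilinear) form on A takes
  the same value on them (the algebraic dual of A (x) A is the space of bilinear forms
  on A, and the dual of a vector space separates points).
\<close>

definition subspace_on :: "('k::field \<Rightarrow> 'h::ab_group_add \<Rightarrow> 'h) \<Rightarrow> 'h set \<Rightarrow> bool" where
  "subspace_on scale A \<longleftrightarrow> 0 \<in> A \<and> (\<forall>x\<in>A. \<forall>y\<in>A. x + y \<in> A) \<and> (\<forall>c. \<forall>x\<in>A. scale c x \<in> A)"

definition linear_map_on :: "('k::field \<Rightarrow> 'h::ab_group_add \<Rightarrow> 'h) \<Rightarrow> 'h set \<Rightarrow> ('h \<Rightarrow> 'h) \<Rightarrow> bool" where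
  "linear_map_on scale A f \<longleftrightarrow> (\<forall>x\<in>A. f x \<in> A) \<and>
     (\<forall>x\<in>A. \<forall>y\<in>A. f (x + y) = f x + f y) \<and> (\<forall>c. \<forall>x\<in>A. f (scale c x) = scale c (f x))"

definition linear_functional_on :: "('k::field \<Rightarrow> 'h::ab_group_add \<Rightarrow> 'h) \<Rightarrow> 'h set \<Rightarrow> ('h \<Rightarrow> 'k) \<Rightarrow> bool" where
  "linear_functional_on scale A f \<longleftrightarrow>
     (\<forall>x\<in>A. \<forall>y\<in>A. f (x + y) = f x + f y) \<and> (\<forall>c. \<forall>x\<in>A. f (scale c x) = c * f x)"

definition bilinear_form_on :: "('k::field \<Rightarrow> 'h::ab_group_add \<Rightarrow> 'h) \<Rightarrow> 'h set \<Rightarrow> ('h \<Rightarrow> 'h \<Rightarrow> 'k) \<Rightarrow> bool" where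
  "bilinear_form_on scale A \<beta> \<longleftrightarrow>
     (\<forall>y\<in>A. linear_functional_on scale A (\<lambda>x. \<beta> x y)) \<and>
     (\<forall>x\<in>A. linear_functional_on scale A (\<lambda>y. \<beta> x y))"

definition trilinear_form_on :: "('k::field \<Rightarrow> 'h::ab_group_add \<Rightarrow> 'h) \<Rightarrow> 'h set \<Rightarrow> ('h \<Rightarrow> 'h \<Rightarrow> 'h \<Rightarrow> 'k) \<Rightarrow> bool" where
  "trilinear_form_on scale A \<gamma> \<longleftrightarrow>
     (\<forall>y\<in>A. \<forall>z\<in>A. linear_functional_on scale A (\<lambda>x. \<gamma> x y z)) \<and>
     (\<forall>x\<in>A. \<forall>z\<in>A. linear_functional_on scale A (\<lambda>y. \<gamma> x y z)) \<and>
     (\<forall>x\<in>A. \<forall>y\<in>A. linear_functional_on scale A (\<lambda>z. \<gamma> x y z))"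

definition tensor2_eq :: "('k::field \<Rightarrow> 'h::ab_group_add \<Rightarrow> 'h) \<Rightarrow> 'h set \<Rightarrow> ('h \<times> 'h) list \<Rightarrow> ('h \<times> 'h) list \<Rightarrow> bool" where
  "tensor2_eq scale A xs ys \<longleftrightarrow>
     (\<forall>\<beta>. bilinear_form_on scale A \<beta> \<longrightarrow>
        sum_list (map (\<lambda>(x, y). \<beta> x y) xs) = sum_list (map (\<lambda>(x, y). \<beta> x y) ys))"

definition tensor3_eq :: "('k::field \<Rightarrow> 'h::ab_group_add \<Rightarrow> 'h) \<Rightarrow> 'h set \<Rightarrow> ('h \<times> 'h \<times> 'h) list \<Rightarrow> ('h \<times> 'h \<times> 'h) list \<Rightarrow> bool" where
  "tensor3_eq scale A xs ys \<longleftrightarrow>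
     (\<forall>\<gamma>. trilinear_form_on scale A \<gamma> \<longrightarrow>
        sum_list (map (\<lambda>(x, y, z). \<gamma> x y z) xs) = sum_list (map (\<lambda>(x, y, z). \<gamma> x y z) ys))"

definition hopf_algebra_on ::
  "('k::field \<Rightarrow> 'h::ab_group_add \<Rightarrow> 'h) \<Rightarrow> 'h set \<Rightarrow> ('h \<Rightarrow> 'h \<Rightarrow> 'h) \<Rightarrow> 'h \<Rightarrow>
   ('h \<Rightarrow> ('h \<times> 'h) list) \<Rightarrow> ('h \<Rightarrow> 'k) \<Rightarrow> ('h \<Rightarrow> 'h) \<Rightarrow> bool" where
  "hopf_algebra_on scale A mult one Delta eps S \<longleftrightarrow>
     subspace_on scale A \<and>
     \<comment> \<open>unital associative algebra\<close>
     (\<forall>a\<in>A. \<forall>b\<in>A. mult a b \<in> A) \<and> one \<in> A \<and>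
     (\<forall>a\<in>A. \<forall>b\<in>A. \<forall>c\<in>A. mult (a + b) c = mult a c + mult b c \<and> mult a (b + c) = mult a b + mult a c) \<and>
     (\<forall>k. \<forall>a\<in>A. \<forall>b\<in>A. mult (scale k a) b = scale k (mult a b) \<and> mult a (scale k b) = scale k (mult a b)) \<and>
     (\<forall>a\<in>A. \<forall>b\<in>A. \<forall>c\<in>A. mult (mult a b) c = mult a (mult b c)) \<and>
     (\<forall>a\<in>A. mult one a = a \<and> mult a one = a) \<and>
     \<comment> \<open>coassociative counital coalgebra\<close>
     (\<forall>a\<in>A. set (Delta a) \<subseteq> A \<times> A) \<and>
     (\<forall>a\<in>A. \<forall>b\<in>A. tensor2_eq scale A (Delta (a + b)) (Delta a @ Delta b)) \<and>
     (\<forall>k. \<forall>a\<in>A. tensor2_eq scale A (Delta (scale k a)) (map (\<lambda>(x, y). (scale k x, y)) (Delta a))) \<and>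
     (\<forall>a\<in>A. tensor3_eq scale A
        (concat (map (\<lambda>(x, y). map (\<lambda>(u, v). (u, v, y)) (Delta x)) (Delta a)))
        (concat (map (\<lambda>(x, y). map (\<lambda>(u, v). (x, u, v)) (Delta y)) (Delta a)))) \<and>
     linear_functional_on scale A eps \<and>
     (\<forall>a\<in>A. sum_list (map (\<lambda>(x, y). scale (eps x) y) (Delta a)) = a \<and>
             sum_list (map (\<lambda>(x, y). scale (eps y) x) (Delta a)) = a) \<and>
     \<comment> \<open>bialgebra: Delta and eps are algebra homomorphisms\<close>
     (\<forall>a\<in>A. \<forall>b\<in>A. tensor2_eq scale A (Delta (mult a b))
        (concat (map (\<lambda>(x, y). map (\<lambda>(u, v). (mult x u, mult y v)) (Delta b)) (Delta a)))) \<and>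
     tensor2_eq scale A (Delta one) [(one, one)] \<and>
     (\<forall>a\<in>A. \<forall>b\<in>A. eps (mult a b) = eps a * eps b) \<and> eps one = 1 \<and>
     \<comment> \<open>antipode\<close>
     linear_map_on scale A S \<and>
     (\<forall>a\<in>A. sum_list (map (\<lambda>(x, y). mult (S x) y) (Delta a)) = scale (eps a) one \<and>
             sum_list (map (\<lambda>(x, y). mult x (S y)) (Delta a)) = scale (eps a) one)"

definition cocommutative_on ::
  "('k::field \<Rightarrow> 'h::ab_group_add \<Rightarrow> 'h) \<Rightarrow> 'h set \<Rightarrow> ('h \<Rightarrow> ('h \<times> 'h) list) \<Rightarrow> bool" where
  "cocommutative_on scale A Delta \<longleftrightarrow>
     (\<forall>a\<in>A. tensor2_eq scale A (Delta a) (map (\<lambda>(x, y). (y, x)) (Delta a)))"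

definition coalgebra_hom ::
  "('k::field \<Rightarrow> 'h::ab_group_add \<Rightarrow> 'h) \<Rightarrow> ('h \<Rightarrow> ('h \<times> 'h) list) \<Rightarrow> ('h \<Rightarrow> 'k) \<Rightarrow> ('h \<Rightarrow> 'h) \<Rightarrow> bool" where
  "coalgebra_hom scale Delta eps f \<longleftrightarrow>
     linear_map_on scale UNIV f \<and>
     (\<forall>a. tensor2_eq scale UNIV (Delta (f a)) (map (\<lambda>(x, y). (f x, f y)) (Delta a))) \<and>
     (\<forall>a. eps (f a) = eps a)"

definition descendent :: "('h \<Rightarrow> ('h \<times> 'h) list) \<Rightarrow> ('h \<Rightarrow> 'h) \<Rightarrow> ('h \<Rightarrow> 'h) \<Rightarrow> ('h \<Rightarrow> 'h) \<Rightarrow> 'h \<Rightarrow> 'h \<Rightarrow> 'h::ring_1" where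
  "descendent Delta S B1 B2 a b = sum_list (map (\<lambda>(x, y). B1 x * b * S (B2 y)) (Delta a))"

definition cocycle :: "('h \<Rightarrow> ('h \<times> 'h) list) \<Rightarrow> ('h \<Rightarrow> 'h) \<Rightarrow> ('h \<Rightarrow> 'h) \<Rightarrow> ('h \<Rightarrow> 'h) \<Rightarrow> 'h \<Rightarrow> 'h::ring_1" where
  "cocycle Delta S B1 B2 a = sum_list (map (\<lambda>(x, y). B1 x * S (B2 y)) (Delta a))"

definition rbs_T :: "('h \<Rightarrow> ('h \<times> 'h) list) \<Rightarrow> ('h \<Rightarrow> 'h) \<Rightarrow> ('h \<Rightarrow> 'h) \<Rightarrow> ('h \<Rightarrow> 'h) \<Rightarrow> 'h \<Rightarrow> 'h::ring_1" where
  "rbs_T Delta S B1 B2 a = sum_list (map (\<lambda>(x, y). S (B1 x) * B2 y) (Delta a))"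

definition rota_baxter_system ::
  "('k::field_char_0 \<Rightarrow> 'h::ring_1 \<Rightarrow> 'h) \<Rightarrow> ('h \<Rightarrow> ('h \<times> 'h) list) \<Rightarrow> ('h \<Rightarrow> 'k) \<Rightarrow> ('h \<Rightarrow> 'h) \<Rightarrow>
   ('h \<Rightarrow> 'h) \<Rightarrow> ('h \<Rightarrow> 'h) \<Rightarrow> bool" where
  "rota_baxter_system scale Delta eps S B1 B2 \<longleftrightarrow>
     vector_space scale \<and>
     hopf_algebra_on scale UNIV (*) 1 Delta eps S \<and>
     cocommutative_on scale UNIV Delta \<and>
     coalgebra_hom scale Delta eps B1 \<and> coalgebra_hom scale Delta eps B2 \<and>
     B1 1 = 1 \<and> B2 1 = 1 \<and>
     (\<forall>a b. B1 a * B1 b = B1 (descendent Delta S B1 B2 a b)) \<and>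
     (\<forall>a b. B2 a * B2 b = B2 (descendent Delta S B1 B2 a b))"

end

theory Submission
  imports Defs
begin

text \<open>
  All computations are done in Sweedler notation: \<open>sweedler a F\<close> is \<open>\<Sum> F(a\<^sub>1, a\<^sub>2)\<close> for an
  \<open>H\<close>-valued bilinear map \<open>F\<close>. Since linear functionals separate points, two tensors that agree on
  all bilinear forms also agree on all such \<open>F\<close>, so every Hopf algebra axiom can be used in this form.

  The Rota-Baxter identities say that \<open>B\<^sub>1\<close> and \<open>B\<^sub>2\<close> turn \<open>\<circ>\<close> into the product of \<open>H\<close>.
  With cocommutativity this gives \<open>\<Delta>(a \<circ> b) = (a\<^sub>1 \<circ> b\<^sub>1) \<otimes> (a\<^sub>2 \<circ> b\<^sub>2)\<close> and associativity
  of \<open>\<circ>\<close>; moreover \<open>\<sigma>(a) = a \<circ> 1\<close> satisfies \<open>B\<^sub>i \<sigma> = B\<^sub>i\<close>, hence \<open>\<sigma>(a) \<circ> b = a \<circ> b\<close> and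
  \<open>\<sigma>\<close> is idempotent. So \<open>H\<^sub>1 = Im \<sigma>\<close> is a subspace closed under \<open>\<circ>\<close> on which \<open>1\<close> is a unit.
  Uniqueness of convolution inverses gives \<open>B\<^sub>i(T a) = S(B\<^sub>i a)\<close>, from which \<open>T\<close> maps into
  \<open>H\<^sub>1\<close> and is an antipode for \<open>\<circ>\<close>. Finally, tensor identities in \<open>H\<close> between elements of
  \<open>H\<^sub>1\<close> descend to \<open>H\<^sub>1 \<otimes> H\<^sub>1\<close> through a linear retraction of \<open>H\<close> onto \<open>H\<^sub>1\<close>.
\<close>

lemma sum_list_map_additive:
  fixes f :: "'a::monoid_add \<Rightarrow> 'b::cancel_comm_monoid_add"
  assumes "\<And>x y. f (x + y) = f x + f y"
  shows "f (sum_list (map g xs)) = sum_list (map (\<lambda>x. f (g x)) xs)"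
proof -
  have "f 0 = 0" using assms[of 0 0] by simp
  then show ?thesis using assms by (induct xs) auto
qed

lemma sum_list_concat_map: "sum_list (map f (concat xss)) = sum_list (map (\<lambda>xs. sum_list (map f xs)) xss)"
  by (induct xss) auto

lemma sum_list_map_swap:
  fixes G :: "'a \<Rightarrow> 'b \<Rightarrow> 'c::comm_monoid_add"
  shows "sum_list (map (\<lambda>p. sum_list (map (G p) ys)) xs) = sum_list (map (\<lambda>q. sum_list (map (\<lambda>p. G p q) xs)) ys)"
  by (induct xs) (simp_all add: sum_list_addf)

section \<open>Tensors as formal sums\<close>

locale vector_space_ring = vs: vector_space scale
  for scale :: "'k::field \<Rightarrow> 'h::ring_1 \<Rightarrow> 'h"
begin

abbreviation linear_op :: "('h \<Rightarrow> 'h) \<Rightarrow> bool" where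
  "linear_op \<equiv> Vector_Spaces.linear scale scale"

lemma linear_op_iff:
  "linear_op f \<longleftrightarrow> (\<forall>x y. f (x + y) = f x + f y) \<and> (\<forall>c x. f (scale c x) = scale c (f x))"
  by (simp add: Vector_Spaces.linear_iff vs.vector_space_axioms)

definition bilinear_op :: "('h \<Rightarrow> 'h \<Rightarrow> 'h) \<Rightarrow> bool" where
  "bilinear_op F \<longleftrightarrow> (\<forall>y. linear_op (\<lambda>x. F x y)) \<and> (\<forall>x. linear_op (F x))"

definition trilinear_op :: "('h \<Rightarrow> 'h \<Rightarrow> 'h \<Rightarrow> 'h) \<Rightarrow> bool" where
  "trilinear_op G \<longleftrightarrow>
     (\<forall>y z. linear_op (\<lambda>x. G x y z)) \<and> (\<forall>x z. linear_op (\<lambda>y. G x y z)) \<and> (\<forall>x y. linear_op (G x y))"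

lemma bilinear_opI: "(\<And>y. linear_op (\<lambda>x. F x y)) \<Longrightarrow> (\<And>x. linear_op (\<lambda>y. F x y)) \<Longrightarrow> bilinear_op F"
  by (simp add: bilinear_op_def)

lemma trilinear_opI:
  "(\<And>y z. linear_op (\<lambda>x. G x y z)) \<Longrightarrow> (\<And>x z. linear_op (\<lambda>y. G x y z)) \<Longrightarrow>
   (\<And>x y. linear_op (\<lambda>z. G x y z)) \<Longrightarrow> trilinear_op G"
  by (simp add: trilinear_op_def)

lemma bilinear_op_compose_left: "bilinear_op F \<Longrightarrow> linear_op f \<Longrightarrow> linear_op (\<lambda>x. F (f x) y)"
  by (simp add: bilinear_op_def linear_op_iff)

lemma bilinear_op_compose_right: "bilinear_op F \<Longrightarrow> linear_op f \<Longrightarrow> linear_op (\<lambda>x. F y (f x))"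
  by (simp add: bilinear_op_def linear_op_iff)

lemma linear_op_ident: "linear_op (\<lambda>x. x)"
  by (simp add: linear_op_iff)

lemma linear_op_compose: "linear_op f \<Longrightarrow> linear_op g \<Longrightarrow> linear_op (\<lambda>x. f (g x))"
  by (simp add: linear_op_iff)

lemma linear_op_add: "linear_op f \<Longrightarrow> linear_op g \<Longrightarrow> linear_op (\<lambda>x. f x + g x)"
  by (simp add: linear_op_iff vs.scale_right_distrib)

lemma linear_op_scale: "linear_op f \<Longrightarrow> linear_op (\<lambda>x. scale c (f x))"
  by (simp add: linear_op_iff vs.scale_right_distrib)

lemma sum_list_scale_left: "sum_list (map (\<lambda>x. scale (f x) v) xs) = scale (sum_list (map f xs)) v"
  by (induct xs) (simp_all add: vs.scale_left_distrib)

lemma sum_list_scale_right: "scale c (sum_list (map g xs)) = sum_list (map (\<lambda>x. scale c (g x)) xs)"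
  by (induct xs) (simp_all add: vs.scale_right_distrib)

lemma eq_zero_if_linear_functionals_vanish:
  assumes "\<And>\<phi>. Vector_Spaces.linear scale (*) \<phi> \<Longrightarrow> \<phi> v = 0"
  shows "v = 0"
proof (rule ccontr)
  assume "v \<noteq> 0"
  then have ind: "vs.independent {v}" by simp
  interpret dual: vector_space_pair scale "(*) :: 'k \<Rightarrow> 'k \<Rightarrow> 'k"
    by unfold_locales (auto simp: algebra_simps)
  obtain \<phi> where \<phi>: "Vector_Spaces.linear scale (*) \<phi>"
      "\<forall>x\<in>vs.extend_basis {v}. \<phi> x = (if x = v then 1 else 0)"
    using dual.linear_independent_extend[OF vs.independent_extend_basis[OF ind], of "\<lambda>x. if x = v then 1 else 0"] by blast
  have "v \<in> vs.extend_basis {v}" using vs.extend_basis_superset[OF ind] by auto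
  with \<phi>(2) have "\<phi> v = 1" by simp
  with assms[OF \<phi>(1)] show False by simp
qed

lemma tensor2_eq_sum_bilinear_op:
  assumes "tensor2_eq scale UNIV xs ys" and F: "bilinear_op F"
  shows "sum_list (map (\<lambda>(x, y). F x y) xs) = sum_list (map (\<lambda>(x, y). F x y) ys)"
proof -
  have "sum_list (map (\<lambda>(x, y). F x y) xs) - sum_list (map (\<lambda>(x, y). F x y) ys) = 0"
  proof (rule eq_zero_if_linear_functionals_vanish)
    fix \<phi> assume \<phi>: "Vector_Spaces.linear scale (*) \<phi>"
    then have add: "\<And>x y. \<phi> (x + y) = \<phi> x + \<phi> y" by (simp add: Vector_Spaces.linear_iff)
    then have diff: "\<And>x y. \<phi> (x - y) = \<phi> x - \<phi> y" by (metis diff_add_cancel eq_diff_eq)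
    have "bilinear_form_on scale UNIV (\<lambda>x y. \<phi> (F x y))"
      using F \<phi> by (simp add: bilinear_form_on_def linear_functional_on_def bilinear_op_def
          linear_op_iff Vector_Spaces.linear_iff)
    with assms(1) have "sum_list (map (\<lambda>(x, y). \<phi> (F x y)) xs) = sum_list (map (\<lambda>(x, y). \<phi> (F x y)) ys)"
      unfolding tensor2_eq_def by blast
    then show "\<phi> (sum_list (map (\<lambda>(x, y). F x y) xs) - sum_list (map (\<lambda>(x, y). F x y) ys)) = 0"
      by (simp add: diff sum_list_map_additive[OF add] case_prod_beta')
  qed
  then show ?thesis by simp
qed

lemma tensor3_eq_sum_trilinear_op:
  assumes "tensor3_eq scale UNIV xs ys" and G: "trilinear_op G"
  shows "sum_list (map (\<lambda>(x, y, z). G x y z) xs) = sum_list (map (\<lambda>(x, y, z). G x y z) ys)"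
proof -
  have "sum_list (map (\<lambda>(x, y, z). G x y z) xs) - sum_list (map (\<lambda>(x, y, z). G x y z) ys) = 0"
  proof (rule eq_zero_if_linear_functionals_vanish)
    fix \<phi> assume \<phi>: "Vector_Spaces.linear scale (*) \<phi>"
    then have add: "\<And>x y. \<phi> (x + y) = \<phi> x + \<phi> y" by (simp add: Vector_Spaces.linear_iff)
    then have diff: "\<And>x y. \<phi> (x - y) = \<phi> x - \<phi> y" by (metis diff_add_cancel eq_diff_eq)
    have "trilinear_form_on scale UNIV (\<lambda>x y z. \<phi> (G x y z))"
      using G \<phi> by (simp add: trilinear_form_on_def linear_functional_on_def trilinear_op_def
          linear_op_iff Vector_Spaces.linear_iff)
    with assms(1) have "sum_list (map (\<lambda>(x, y, z). \<phi> (G x y z)) xs) = sum_list (map (\<lambda>(x, y, z). \<phi> (G x y z)) ys)"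
      unfolding tensor3_eq_def by blast
    then show "\<phi> (sum_list (map (\<lambda>(x, y, z). G x y z) xs) - sum_list (map (\<lambda>(x, y, z). G x y z) ys)) = 0"
      by (simp add: diff sum_list_map_additive[OF add] case_prod_beta')
  qed
  then show ?thesis by simp
qed

lemma subspace_retraction:
  assumes "vs.subspace A"
  obtains P where "linear_op P" "\<And>x. P x \<in> A" "\<And>v. v \<in> A \<Longrightarrow> P v = v"
proof -
  interpret vector_space_pair scale scale by unfold_locales
  obtain P where "range P \<subseteq> A" "linear_op P" "\<forall>v\<in>A. P (id v) = v"
    using linear_exists_left_inverse_on[OF vs.linear_id assms] by auto
  with that show ?thesis by auto
qed

lemma tensor2_eq_subspaceI:
  assumes A: "vs.subspace A" and xs: "set xs \<subseteq> A \<times> A" and ys: "set ys \<subseteq> A \<times> A"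
    and eq: "\<And>F. bilinear_op F \<Longrightarrow>
      sum_list (map (\<lambda>(x, y). F x y) xs) = sum_list (map (\<lambda>(x, y). F x y) ys)"
  shows "tensor2_eq scale A xs ys"
  unfolding tensor2_eq_def
proof (intro allI impI)
  fix \<beta> assume \<beta>: "bilinear_form_on scale A \<beta>"
  obtain P where P: "linear_op P" "\<And>x. P x \<in> A" "\<And>v. v \<in> A \<Longrightarrow> P v = v"
    using subspace_retraction[OF A] by blast
  have "bilinear_op (\<lambda>x y. scale (\<beta> (P x) (P y)) 1)"
    using \<beta> P(1,2) by (simp add: bilinear_op_def linear_op_iff bilinear_form_on_def
        linear_functional_on_def vs.scale_left_distrib)
  from eq[OF this]
  have "sum_list (map (\<lambda>(x, y). \<beta> (P x) (P y)) xs) = sum_list (map (\<lambda>(x, y). \<beta> (P x) (P y)) ys)"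
    by (simp add: sum_list_scale_left case_prod_beta')
  moreover have "map (\<lambda>(x, y). \<beta> (P x) (P y)) zs = map (\<lambda>(x, y). \<beta> x y) zs"
    if "set zs \<subseteq> A \<times> A" for zs
    using that P(3) by (auto intro!: map_cong)
  ultimately show "sum_list (map (\<lambda>(x, y). \<beta> x y) xs) = sum_list (map (\<lambda>(x, y). \<beta> x y) ys)"
    using xs ys by simp
qed

lemma tensor3_eq_subspaceI:
  assumes A: "vs.subspace A" and xs: "set xs \<subseteq> A \<times> A \<times> A" and ys: "set ys \<subseteq> A \<times> A \<times> A"
    and eq: "\<And>G. trilinear_op G \<Longrightarrow>
      sum_list (map (\<lambda>(x, y, z). G x y z) xs) = sum_list (map (\<lambda>(x, y, z). G x y z) ys)"
  shows "tensor3_eq scale A xs ys"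
  unfolding tensor3_eq_def
proof (intro allI impI)
  fix \<gamma> assume \<gamma>: "trilinear_form_on scale A \<gamma>"
  obtain P where P: "linear_op P" "\<And>x. P x \<in> A" "\<And>v. v \<in> A \<Longrightarrow> P v = v"
    using subspace_retraction[OF A] by blast
  have "trilinear_op (\<lambda>x y z. scale (\<gamma> (P x) (P y) (P z)) 1)"
    using \<gamma> P(1,2) by (simp add: trilinear_op_def linear_op_iff trilinear_form_on_def
        linear_functional_on_def vs.scale_left_distrib)
  from eq[OF this]
  have "sum_list (map (\<lambda>(x, y, z). \<gamma> (P x) (P y) (P z)) xs) =
        sum_list (map (\<lambda>(x, y, z). \<gamma> (P x) (P y) (P z)) ys)"
    by (simp add: sum_list_scale_left case_prod_beta')
  moreover have "map (\<lambda>(x, y, z). \<gamma> (P x) (P y) (P z)) zs = map (\<lambda>(x, y, z). \<gamma> x y z) zs"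
    if "set zs \<subseteq> A \<times> A \<times> A" for zs
    using that P(3) by (auto intro!: map_cong)
  ultimately show "sum_list (map (\<lambda>(x, y, z). \<gamma> x y z) xs) = sum_list (map (\<lambda>(x, y, z). \<gamma> x y z) ys)"
    using xs ys by simp
qed

end


section \<open>Sweedler calculus in a Hopf algebra\<close>

locale hopf_algebra_ring = vector_space_ring scale
  for scale :: "'k::field \<Rightarrow> 'h::ring_1 \<Rightarrow> 'h" +
  fixes Delta :: "'h \<Rightarrow> ('h \<times> 'h) list" and eps :: "'h \<Rightarrow> 'k" and S :: "'h \<Rightarrow> 'h"
  assumes hopf_algebra: "hopf_algebra_on scale UNIV (*) 1 Delta eps S"
begin

definition sweedler :: "'h \<Rightarrow> ('h \<Rightarrow> 'h \<Rightarrow> 'h) \<Rightarrow> 'h" where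
  "sweedler a F = sum_list (map (\<lambda>(x, y). F x y) (Delta a))"

lemma scale_mult_left: "scale k a * b = scale k (a * b)"
  using hopf_algebra by (simp add: hopf_algebra_on_def)

lemma scale_mult_right: "a * scale k b = scale k (a * b)"
  using hopf_algebra by (simp add: hopf_algebra_on_def)

lemma eps_add: "eps (a + b) = eps a + eps b"
  using hopf_algebra by (simp add: hopf_algebra_on_def linear_functional_on_def)

lemma eps_scale: "eps (scale c a) = c * eps a"
  using hopf_algebra by (simp add: hopf_algebra_on_def linear_functional_on_def)

lemma eps_mult: "eps (a * b) = eps a * eps b"
  using hopf_algebra by (simp add: hopf_algebra_on_def)

lemma eps_one: "eps 1 = 1"
  using hopf_algebra by (simp add: hopf_algebra_on_def)

lemma linear_op_S: "linear_op S"
  using hopf_algebra by (simp add: hopf_algebra_on_def linear_map_on_def linear_op_iff)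

lemma sweedler_tensor2_eq:
  "tensor2_eq scale UNIV (Delta a) ys \<Longrightarrow> bilinear_op F \<Longrightarrow>
   sweedler a F = sum_list (map (\<lambda>(x, y). F x y) ys)"
  unfolding sweedler_def by (rule tensor2_eq_sum_bilinear_op)

lemma sweedler_add: "bilinear_op F \<Longrightarrow> sweedler (a + b) F = sweedler a F + sweedler b F"
  using hopf_algebra by (simp add: hopf_algebra_on_def sweedler_tensor2_eq[where ys = "Delta a @ Delta b"])
    (simp add: sweedler_def)

lemma sweedler_scale:
  assumes F: "bilinear_op F"
  shows "sweedler (scale c a) F = scale c (sweedler a F)"
proof -
  have "tensor2_eq scale UNIV (Delta (scale c a)) (map (\<lambda>(x, y). (scale c x, y)) (Delta a))"
    using hopf_algebra by (simp add: hopf_algebra_on_def)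
  from tensor2_eq_sum_bilinear_op[OF this F]
  have "sweedler (scale c a) F = sum_list (map (\<lambda>(x, y). F (scale c x) y) (Delta a))"
    by (simp add: sweedler_def case_prod_beta' o_def)
  also have "\<dots> = sum_list (map (\<lambda>(x, y). scale c (F x y)) (Delta a))"
    using F by (simp add: bilinear_op_def linear_op_iff case_prod_beta')
  finally show ?thesis by (simp add: sweedler_def sum_list_scale_right case_prod_beta')
qed

lemma sweedler_coassoc:
  assumes "trilinear_op G"
  shows "sweedler a (\<lambda>x y. sweedler x (\<lambda>u v. G u v y)) = sweedler a (\<lambda>x y. sweedler y (G x))"
proof -
  have "tensor3_eq scale UNIV
      (concat (map (\<lambda>(x, y). map (\<lambda>(u, v). (u, v, y)) (Delta x)) (Delta a)))
      (concat (map (\<lambda>(x, y). map (\<lambda>(u, v). (x, u, v)) (Delta y)) (Delta a)))"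
    using hopf_algebra by (simp add: hopf_algebra_on_def)
  from tensor3_eq_sum_trilinear_op[OF this assms] show ?thesis
    by (simp add: sweedler_def sum_list_concat_map o_def case_prod_beta')
qed

lemma sweedler_counit_left: "sweedler a (\<lambda>x y. scale (eps x) y) = a"
  and sweedler_counit_right: "sweedler a (\<lambda>x y. scale (eps y) x) = a"
  using hopf_algebra by (simp_all add: hopf_algebra_on_def sweedler_def)

lemma sweedler_antipode_left: "sweedler a (\<lambda>x y. S x * y) = scale (eps a) 1"
  and sweedler_antipode_right: "sweedler a (\<lambda>x y. x * S y) = scale (eps a) 1"
  using hopf_algebra by (simp_all add: hopf_algebra_on_def sweedler_def)

lemma sweedler_mult:
  assumes "bilinear_op F"
  shows "sweedler (a * b) F = sweedler a (\<lambda>x y. sweedler b (\<lambda>u v. F (x * u) (y * v)))"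
proof -
  have "tensor2_eq scale UNIV (Delta (a * b))
      (concat (map (\<lambda>(x, y). map (\<lambda>(u, v). (x * u, y * v)) (Delta b)) (Delta a)))"
    using hopf_algebra by (simp add: hopf_algebra_on_def)
  from sweedler_tensor2_eq[OF this assms] show ?thesis
    by (simp add: sweedler_def sum_list_concat_map o_def case_prod_beta')
qed

lemma sweedler_one: "bilinear_op F \<Longrightarrow> sweedler 1 F = F 1 1"
  using hopf_algebra by (simp add: hopf_algebra_on_def sweedler_tensor2_eq[where ys = "[(1, 1)]"])

lemma sweedler_cong: "(\<And>x y. F x y = G x y) \<Longrightarrow> sweedler a F = sweedler a G"
  by (simp add: sweedler_def)

lemma sweedler_add_fun: "sweedler a (\<lambda>x y. F x y + G x y) = sweedler a F + sweedler a G"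
  by (simp add: sweedler_def sum_list_addf case_prod_beta')

lemma sweedler_scale_fun: "sweedler a (\<lambda>x y. scale c (F x y)) = scale c (sweedler a F)"
  by (simp add: sweedler_def sum_list_scale_right case_prod_beta')

lemma sweedler_mult_left: "sweedler a (\<lambda>x y. c * F x y) = c * sweedler a F"
  by (simp add: sweedler_def sum_list_const_mult case_prod_beta')

lemma sweedler_mult_right: "sweedler a (\<lambda>x y. F x y * c) = sweedler a F * c"
  by (simp add: sweedler_def sum_list_mult_const case_prod_beta')

lemma linear_op_sweedler: "linear_op f \<Longrightarrow> f (sweedler a F) = sweedler a (\<lambda>x y. f (F x y))"
  by (simp add: sweedler_def linear_op_iff sum_list_map_additive case_prod_beta')

lemma sweedler_swap:
  "sweedler a (\<lambda>x y. sweedler b (G x y)) = sweedler b (\<lambda>u v. sweedler a (\<lambda>x y. G x y u v))"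
  unfolding sweedler_def case_prod_beta' by (rule sum_list_map_swap)

lemma sweedler_product:
  "sweedler x (\<lambda>x1 x2. sweedler y (\<lambda>y1 y2. P x1 x2 * Q y1 y2)) = sweedler x P * sweedler y Q"
  by (simp add: sweedler_mult_left sweedler_mult_right)

lemma linear_op_mult_right: "linear_op f \<Longrightarrow> linear_op (\<lambda>x. f x * c)"
  by (simp add: linear_op_iff distrib_right scale_mult_left)

lemma linear_op_mult_left: "linear_op f \<Longrightarrow> linear_op (\<lambda>x. c * f x)"
  by (simp add: linear_op_iff distrib_left scale_mult_right)

lemma linear_op_scale_eps: "linear_op f \<Longrightarrow> linear_op (\<lambda>x. scale (eps (f x)) c)"
  by (simp add: linear_op_iff eps_add eps_scale vs.scale_left_distrib)

lemma linear_op_compose_S: "linear_op f \<Longrightarrow> linear_op (\<lambda>x. S (f x))"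
  using linear_op_S by (simp add: linear_op_iff)

lemma linear_op_sweedler_arg: "bilinear_op F \<Longrightarrow> linear_op f \<Longrightarrow> linear_op (\<lambda>x. sweedler (f x) F)"
  by (simp add: linear_op_iff sweedler_add sweedler_scale)

lemma linear_op_sweedler_fun:
  assumes "\<And>u v. linear_op (\<lambda>x. G x u v)"
  shows "linear_op (\<lambda>x. sweedler a (G x))"
proof -
  have "G (x + y) = (\<lambda>u v. G x u v + G y u v)" "G (scale c x) = (\<lambda>u v. scale c (G x u v))" for x y c
    using assms by (simp_all add: linear_op_iff fun_eq_iff)
  then show ?thesis by (simp add: linear_op_iff sweedler_add_fun sweedler_scale_fun)
qed

lemmas linear_op_intros = linear_op_ident linear_op_add linear_op_scale linear_op_scale_eps
  linear_op_compose_S linear_op_sweedler_fun linear_op_sweedler_arg linear_op_mult_left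
  linear_op_mult_right bilinear_opI trilinear_opI

lemma sweedler_counit_left_linear: "linear_op f \<Longrightarrow> sweedler a (\<lambda>x y. scale (eps x) (f y)) = f a"
  using linear_op_sweedler[of f a "\<lambda>x y. scale (eps x) y"] by (simp add: sweedler_counit_left linear_op_iff)

lemma sweedler_counit_right_linear: "linear_op f \<Longrightarrow> sweedler a (\<lambda>x y. scale (eps y) (f x)) = f a"
  using linear_op_sweedler[of f a "\<lambda>x y. scale (eps y) x"] by (simp add: sweedler_counit_right linear_op_iff)

lemma bilinear_op_sweedler_sweedler:
  assumes F: "bilinear_op F"
  shows "F (sweedler x G1) (sweedler y G2) =
    sweedler x (\<lambda>x1 x2. sweedler y (\<lambda>y1 y2. F (G1 x1 x2) (G2 y1 y2)))"
proof -
  have "F (sweedler x G1) (sweedler y G2) = sweedler x (\<lambda>x1 x2. F (G1 x1 x2) (sweedler y G2))"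
    by (rule linear_op_sweedler[where f = "\<lambda>z. F z (sweedler y G2)"])
      (intro bilinear_op_compose_left[OF F] linear_op_ident)
  also have "\<dots> = sweedler x (\<lambda>x1 x2. sweedler y (\<lambda>y1 y2. F (G1 x1 x2) (G2 y1 y2)))"
    by (rule sweedler_cong, rule linear_op_sweedler) (intro bilinear_op_compose_right[OF F] linear_op_ident)
  finally show ?thesis .
qed


lemma sweedler_counit_mult: "sweedler a (\<lambda>x y. scale (eps x) 1 * scale (eps y) 1) = scale (eps a) 1"
  by (simp add: scale_mult_left sweedler_counit_left_linear linear_op_intros del: vs.scale_scale)

lemma linear_op_coalgebra_hom: "coalgebra_hom scale Delta eps f \<Longrightarrow> linear_op f"
  by (simp add: coalgebra_hom_def linear_map_on_def linear_op_iff)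

lemma sweedler_coalgebra_hom:
  assumes "coalgebra_hom scale Delta eps f" "bilinear_op F"
  shows "sweedler (f a) F = sweedler a (\<lambda>x y. F (f x) (f y))"
proof -
  have "tensor2_eq scale UNIV (Delta (f a)) (map (\<lambda>(x, y). (f x, f y)) (Delta a))"
    using assms(1) by (simp add: coalgebra_hom_def)
  from sweedler_tensor2_eq[OF this assms(2)] show ?thesis
    by (simp add: sweedler_def o_def case_prod_beta')
qed

lemma sweedler_coalgebra_hom_antipode:
  assumes f: "coalgebra_hom scale Delta eps f"
  shows "sweedler a (\<lambda>x y. S (f x) * f y) = scale (eps a) 1"
    and "sweedler a (\<lambda>x y. f x * S (f y)) = scale (eps a) 1"
  using sweedler_antipode_left[of "f a"] sweedler_antipode_right[of "f a"] f
  by (simp_all add: sweedler_coalgebra_hom[OF f] linear_op_intros coalgebra_hom_def)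

lemma convolution_inverse_unique:
  assumes f: "linear_op f" and g: "linear_op g" and h: "linear_op h"
    and gf: "\<And>a. sweedler a (\<lambda>x y. g x * f y) = scale (eps a) 1"
    and hg: "\<And>a. sweedler a (\<lambda>x y. h x * g y) = scale (eps a) 1"
  shows "f = h"
proof
  fix a
  have "h a = sweedler a (\<lambda>x y. h x * scale (eps y) 1)"
    by (simp add: scale_mult_right sweedler_counit_right_linear[OF h])
  also have "\<dots> = sweedler a (\<lambda>x y. sweedler y (\<lambda>u v. h x * (g u * f v)))"
    by (simp add: gf sweedler_mult_left)
  also have "\<dots> = sweedler a (\<lambda>x y. sweedler x (\<lambda>u v. h u * (g v * f y)))"
    by (rule sweedler_coassoc[symmetric]) (intro linear_op_intros f g h)
  also have "\<dots> = sweedler a (\<lambda>x y. sweedler x (\<lambda>u v. h u * g v) * f y)"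
    by (simp add: sweedler_mult_right[symmetric] mult.assoc)
  also have "\<dots> = f a"
    by (simp add: hg scale_mult_left sweedler_counit_left_linear[OF f])
  finally show "f a = h a" ..
qed

lemma sweedler2_coassoc:
  assumes "bilinear_op f" "bilinear_op g" "bilinear_op h"
  shows "sweedler a (\<lambda>a1 a'. sweedler b (\<lambda>b1 b'.
           f a1 b1 * sweedler a' (\<lambda>a2 a3. sweedler b' (\<lambda>b2 b3. g a2 b2 * h a3 b3)))) =
         sweedler a (\<lambda>a' a3. sweedler b (\<lambda>b' b3.
           sweedler a' (\<lambda>a1 a2. sweedler b' (\<lambda>b1 b2. f a1 b1 * g a2 b2)) * h a3 b3))"
proof -
  note lin = assms[unfolded bilinear_op_def, THEN conjunct1, rule_format]
    assms[unfolded bilinear_op_def, THEN conjunct2, rule_format]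
  have "sweedler a (\<lambda>a1 a'. sweedler b (\<lambda>b1 b'.
          f a1 b1 * sweedler a' (\<lambda>a2 a3. sweedler b' (\<lambda>b2 b3. g a2 b2 * h a3 b3)))) =
        sweedler a (\<lambda>a1 a'. sweedler b (\<lambda>b1 b'. sweedler a' (\<lambda>a2 a3.
          sweedler b' (\<lambda>b2 b3. f a1 b1 * (g a2 b2 * h a3 b3)))))"
    by (simp add: sweedler_mult_left)
  also have "\<dots> = sweedler a (\<lambda>a1 a'. sweedler a' (\<lambda>a2 a3. sweedler b (\<lambda>b1 b'.
          sweedler b' (\<lambda>b2 b3. f a1 b1 * (g a2 b2 * h a3 b3)))))"
    by (rule sweedler_cong, rule sweedler_swap)
  also have "\<dots> = sweedler a (\<lambda>a' a3. sweedler a' (\<lambda>a1 a2. sweedler b (\<lambda>b1 b'.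
          sweedler b' (\<lambda>b2 b3. f a1 b1 * (g a2 b2 * h a3 b3)))))"
    by (rule sweedler_coassoc[symmetric]) (intro linear_op_intros lin)
  also have "\<dots> = sweedler a (\<lambda>a' a3. sweedler a' (\<lambda>a1 a2. sweedler b (\<lambda>b' b3.
          sweedler b' (\<lambda>b1 b2. f a1 b1 * (g a2 b2 * h a3 b3)))))"
    by (intro sweedler_cong sweedler_coassoc[symmetric]) (intro linear_op_intros lin)
  also have "\<dots> = sweedler a (\<lambda>a' a3. sweedler b (\<lambda>b' b3. sweedler a' (\<lambda>a1 a2.
          sweedler b' (\<lambda>b1 b2. f a1 b1 * (g a2 b2 * h a3 b3)))))"
    by (rule sweedler_cong, rule sweedler_swap)
  also have "\<dots> = sweedler a (\<lambda>a' a3. sweedler b (\<lambda>b' b3.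
          sweedler a' (\<lambda>a1 a2. sweedler b' (\<lambda>b1 b2. f a1 b1 * g a2 b2)) * h a3 b3))"
    by (simp only: sweedler_mult_right[symmetric] mult.assoc)
  finally show ?thesis .
qed

lemma convolution_inverse_unique2:
  assumes N: "bilinear_op N" and m: "bilinear_op m" and M: "bilinear_op M"
    and Nm: "\<And>a b. sweedler a (\<lambda>a1 a2. sweedler b (\<lambda>b1 b2. N a1 b1 * m a2 b2)) = scale (eps a * eps b) 1"
    and mM: "\<And>a b. sweedler a (\<lambda>a1 a2. sweedler b (\<lambda>b1 b2. m a1 b1 * M a2 b2)) = scale (eps a * eps b) 1"
  shows "N a b = M a b"
proof -
  note lin = N[unfolded bilinear_op_def] M[unfolded bilinear_op_def]
  have "N a b = sweedler a (\<lambda>a1 a2. scale (eps a2) (sweedler b (\<lambda>b1 b2. scale (eps b2) (N a1 b1))))"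
    using lin by (simp add: sweedler_counit_right_linear)
  also have "\<dots> = sweedler a (\<lambda>a1 a'. sweedler b (\<lambda>b1 b'.
      N a1 b1 * sweedler a' (\<lambda>a2 a3. sweedler b' (\<lambda>b2 b3. m a2 b2 * M a3 b3))))"
    by (simp add: mM sweedler_scale_fun[symmetric] scale_mult_right mult.commute)
  also have "\<dots> = sweedler a (\<lambda>a' a3. sweedler b (\<lambda>b' b3.
      sweedler a' (\<lambda>a1 a2. sweedler b' (\<lambda>b1 b2. N a1 b1 * m a2 b2)) * M a3 b3))"
    by (rule sweedler2_coassoc[OF N m M])
  also have "\<dots> = sweedler a (\<lambda>a' a3. sweedler b (\<lambda>b' b3. scale (eps a') (scale (eps b') (M a3 b3))))"
    by (simp add: Nm scale_mult_left mult.commute)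
  also have "\<dots> = M a b"
    using lin by (simp add: sweedler_scale_fun sweedler_counit_left_linear del: vs.scale_scale)
  finally show ?thesis .
qed

lemma S_one: "S 1 = 1"
  using sweedler_antipode_right[of 1] sweedler_one[of "\<lambda>x y. x * S y"]
  by (simp add: eps_one linear_op_intros)

lemma eps_S: "eps (S a) = eps a"
proof -
  have "scale (eps (S a)) (1::'h) = sweedler a (\<lambda>x y. scale (eps (S (scale (eps y) x))) 1)"
    by (subst (1) sweedler_counit_right[symmetric, of a], rule linear_op_sweedler) (intro linear_op_intros)
  also have "\<dots> = sweedler a (\<lambda>x y. scale (eps (S x * y)) 1)"
    using linear_op_S by (simp add: linear_op_iff eps_scale eps_mult mult.commute)
  also have "\<dots> = scale (eps a) 1"
    by (subst linear_op_sweedler[symmetric]) (intro linear_op_intros, simp add: sweedler_antipode_left eps_scale eps_one)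
  finally show ?thesis by simp
qed

lemma S_mult: "S (a * b) = S b * S a"
proof (rule convolution_inverse_unique2[where N = "\<lambda>x y. S (x * y)" and m = "(*)" and M = "\<lambda>x y. S y * S x"])
  show "sweedler a (\<lambda>a1 a2. sweedler b (\<lambda>b1 b2. S (a1 * b1) * (a2 * b2))) = scale (eps a * eps b) 1"
    for a b
    using sweedler_mult[of "\<lambda>x y. S x * y" a b]
    by (simp add: linear_op_intros sweedler_antipode_left eps_mult)
  show "sweedler a (\<lambda>a1 a2. sweedler b (\<lambda>b1 b2. a1 * b1 * (S b2 * S a2))) = scale (eps a * eps b) 1"
    for a b
  proof -
    have "sweedler a (\<lambda>a1 a2. sweedler b (\<lambda>b1 b2. a1 * b1 * (S b2 * S a2))) =
        sweedler a (\<lambda>a1 a2. a1 * sweedler b (\<lambda>b1 b2. b1 * S b2) * S a2)"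
      by (simp add: sweedler_mult_left sweedler_mult_right[symmetric] mult.assoc)
    also have "\<dots> = sweedler a (\<lambda>a1 a2. scale (eps b) (a1 * S a2))"
      by (simp add: sweedler_antipode_right scale_mult_left scale_mult_right)
    finally show ?thesis
      by (simp add: sweedler_scale_fun sweedler_antipode_right mult.commute)
  qed
qed (intro linear_op_intros)+


lemma sweedler_antipode_crossed:
  assumes G: "bilinear_op G"
  shows "sweedler a (\<lambda>p q. sweedler p (\<lambda>p1 p2. sweedler q (\<lambda>q1 q2. G (p1 * S q2) (p2 * S q1)))) =
    scale (eps a) (G 1 1)"
proof -
  note GL = bilinear_op_compose_left[OF G] and GR = bilinear_op_compose_right[OF G]
  have "sweedler a (\<lambda>p q. sweedler p (\<lambda>p1 p2. sweedler q (\<lambda>q1 q2. G (p1 * S q2) (p2 * S q1)))) =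
      sweedler a (\<lambda>p1 r. sweedler r (\<lambda>p2 q. sweedler q (\<lambda>q1 q2. G (p1 * S q2) (p2 * S q1))))"
    by (rule sweedler_coassoc) (intro linear_op_intros GL GR)
  also have "\<dots> = sweedler a (\<lambda>p1 r. sweedler r (\<lambda>m q2. sweedler m (\<lambda>p2 q1. G (p1 * S q2) (p2 * S q1))))"
    by (rule sweedler_cong, rule sweedler_coassoc[symmetric]) (intro linear_op_intros GL GR)
  also have "\<dots> = sweedler a (\<lambda>p1 r. sweedler r (\<lambda>m q2. G (p1 * S q2) (sweedler m (\<lambda>p2 q1. p2 * S q1))))"
    by (intro sweedler_cong linear_op_sweedler[symmetric] GR linear_op_ident)
  also have "\<dots> = sweedler a (\<lambda>p1 r. sweedler r (\<lambda>m q2. scale (eps m) (G (p1 * S q2) 1)))"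
    using G by (simp add: sweedler_antipode_right bilinear_op_def linear_op_iff)
  also have "\<dots> = sweedler a (\<lambda>p1 r. G (p1 * S r) 1)"
    by (intro sweedler_cong sweedler_counit_left_linear) (intro linear_op_intros GL)
  also have "\<dots> = G (sweedler a (\<lambda>p1 r. p1 * S r)) 1"
    by (rule linear_op_sweedler[symmetric]) (intro linear_op_intros GL)
  also have "\<dots> = scale (eps a) (G 1 1)"
    using G by (simp add: sweedler_antipode_right bilinear_op_def linear_op_iff)
  finally show ?thesis .
qed

lemma sweedler_S_swapped:
  assumes F: "bilinear_op F"
  shows "sweedler (S a) F = sweedler a (\<lambda>x y. F (S y) (S x))"
proof -
  note FL = bilinear_op_compose_left[OF F] and FR = bilinear_op_compose_right[OF F]
  let ?K = "\<lambda>q u v. sweedler q (\<lambda>q1 q2. F (u * S q2) (v * S q1))"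
  have K: "bilinear_op (?K q)" for q by (intro linear_op_intros FL FR)
  have "sweedler (S a) F = sweedler a (\<lambda>a1 a2. sweedler (S (scale (eps a2) a1)) F)"
    by (subst (1) sweedler_counit_right[symmetric, of a], rule linear_op_sweedler) (intro linear_op_intros F)
  also have "\<dots> = sweedler a (\<lambda>a1 a2. sweedler (S a1) (\<lambda>x y. scale (eps a2) (F x y)))"
    using linear_op_S F by (simp add: linear_op_iff sweedler_scale sweedler_scale_fun)
  also have "\<dots> = sweedler a (\<lambda>a1 a2. sweedler (S a1) (\<lambda>x y.
      sweedler a2 (\<lambda>p q. sweedler p (\<lambda>p1 p2. ?K q (x * p1) (y * p2)))))"
  proof (rule sweedler_cong, rule sweedler_cong)
    fix a2 x y
    have "bilinear_op (\<lambda>u v. F (x * u) (y * v))" by (intro linear_op_intros FL FR)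
    from sweedler_antipode_crossed[OF this, of a2]
    show "scale (eps a2) (F x y) = sweedler a2 (\<lambda>p q. sweedler p (\<lambda>p1 p2. ?K q (x * p1) (y * p2)))"
      by (simp add: mult.assoc)
  qed
  also have "\<dots> = sweedler a (\<lambda>a1 a2. sweedler a2 (\<lambda>p q.
      sweedler (S a1) (\<lambda>x y. sweedler p (\<lambda>p1 p2. ?K q (x * p1) (y * p2)))))"
    by (rule sweedler_cong, rule sweedler_swap)
  also have "\<dots> = sweedler a (\<lambda>a' q. sweedler a' (\<lambda>a1 p.
      sweedler (S a1) (\<lambda>x y. sweedler p (\<lambda>p1 p2. ?K q (x * p1) (y * p2)))))"
    by (rule sweedler_coassoc[symmetric]) (intro linear_op_intros FL FR)
  also have "\<dots> = sweedler a (\<lambda>a' q. sweedler (sweedler a' (\<lambda>a1 p. S a1 * p)) (?K q))"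
  proof (rule sweedler_cong)
    fix a' q
    have "sweedler a' (\<lambda>a1 p. sweedler (S a1) (\<lambda>x y. sweedler p (\<lambda>p1 p2. ?K q (x * p1) (y * p2)))) =
        sweedler a' (\<lambda>a1 p. sweedler (S a1 * p) (?K q))"
      by (rule sweedler_cong, rule sweedler_mult[OF K, symmetric])
    also have "\<dots> = sweedler (sweedler a' (\<lambda>a1 p. S a1 * p)) (?K q)"
      by (rule linear_op_sweedler[symmetric]) (intro linear_op_intros K)
    finally show "sweedler a' (\<lambda>a1 p. sweedler (S a1) (\<lambda>x y. sweedler p (\<lambda>p1 p2. ?K q (x * p1) (y * p2)))) =
        sweedler (sweedler a' (\<lambda>a1 p. S a1 * p)) (?K q)" .
  qed
  also have "\<dots> = sweedler a (\<lambda>a' q. scale (eps a') (?K q 1 1))"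
    by (simp add: sweedler_antipode_left sweedler_scale sweedler_one K)
  also have "\<dots> = sweedler a (\<lambda>x y. F (S y) (S x))"
    by (simp add: sweedler_counit_left_linear linear_op_intros FL FR)
  finally show ?thesis .
qed

end


locale cocommutative_hopf_algebra_ring = hopf_algebra_ring +
  assumes cocommutative: "cocommutative_on scale UNIV Delta"
begin

lemma sweedler_cocomm: "bilinear_op F \<Longrightarrow> sweedler a F = sweedler a (\<lambda>x y. F y x)"
proof -
  assume F: "bilinear_op F"
  have "tensor2_eq scale UNIV (Delta a) (map (\<lambda>(x, y). (y, x)) (Delta a))"
    using cocommutative by (simp add: cocommutative_on_def)
  from sweedler_tensor2_eq[OF this F] show ?thesis
    by (simp add: sweedler_def o_def case_prod_beta')
qed

lemma S_S: "S (S a) = a"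
proof -
  have "(\<lambda>x. S (S x)) = (\<lambda>x. x)"
  proof (rule convolution_inverse_unique[where g = S])
    show "sweedler a (\<lambda>x y. S x * S (S y)) = scale (eps a) 1" for a
    proof -
      have "sweedler a (\<lambda>x y. S x * S (S y)) = S (sweedler a (\<lambda>x y. S y * x))"
        by (simp add: S_mult linear_op_sweedler[OF linear_op_S])
      also have "\<dots> = S (sweedler a (\<lambda>x y. S x * y))"
        by (subst sweedler_cocomm) (intro linear_op_intros, simp)
      also have "\<dots> = scale (eps a) 1"
        using linear_op_S by (simp add: sweedler_antipode_left linear_op_iff S_one)
      finally show ?thesis .
    qed
  qed (simp_all add: sweedler_antipode_right linear_op_intros)
  then show ?thesis by (rule fun_cong)
qed

lemma sweedler_S:
  assumes F: "bilinear_op F"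
  shows "sweedler (S a) F = sweedler a (\<lambda>x y. F (S x) (S y))"
  unfolding sweedler_S_swapped[OF F]
  by (rule sweedler_cocomm[symmetric])
    (intro linear_op_intros bilinear_op_compose_left[OF F] bilinear_op_compose_right[OF F])

lemma sweedler_middle_swap:
  assumes "\<And>b c d. linear_op (\<lambda>a. K a b c d)" "\<And>a c d. linear_op (\<lambda>b. K a b c d)"
    "\<And>a b d. linear_op (\<lambda>c. K a b c d)" "\<And>a b c. linear_op (\<lambda>d. K a b c d)"
  shows "sweedler a (\<lambda>x y. sweedler x (\<lambda>x1 x2. sweedler y (\<lambda>y1 y2. K x1 x2 y1 y2))) =
    sweedler a (\<lambda>x y. sweedler x (\<lambda>x1 x2. sweedler y (\<lambda>y1 y2. K x1 y1 x2 y2)))"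
proof -
  have "sweedler a (\<lambda>x y. sweedler x (\<lambda>x1 x2. sweedler y (\<lambda>y1 y2. K x1 x2 y1 y2))) =
      sweedler a (\<lambda>x1 r. sweedler r (\<lambda>x2 y. sweedler y (\<lambda>y1 y2. K x1 x2 y1 y2)))"
    by (rule sweedler_coassoc) (intro linear_op_intros assms)
  also have "\<dots> = sweedler a (\<lambda>x1 r. sweedler r (\<lambda>m y2. sweedler m (\<lambda>x2 y1. K x1 x2 y1 y2)))"
    by (rule sweedler_cong, rule sweedler_coassoc[symmetric]) (intro linear_op_intros assms)
  also have "\<dots> = sweedler a (\<lambda>x1 r. sweedler r (\<lambda>m y2. sweedler m (\<lambda>p q. K x1 q p y2)))"
    by (rule sweedler_cong, rule sweedler_cong, rule sweedler_cocomm) (intro linear_op_intros assms)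
  also have "\<dots> = sweedler a (\<lambda>x1 r. sweedler r (\<lambda>p y. sweedler y (\<lambda>q y2. K x1 q p y2)))"
    by (rule sweedler_cong, rule sweedler_coassoc) (intro linear_op_intros assms)
  also have "\<dots> = sweedler a (\<lambda>x y. sweedler x (\<lambda>x1 p. sweedler y (\<lambda>q y2. K x1 q p y2)))"
    by (rule sweedler_coassoc[symmetric]) (intro linear_op_intros assms)
  finally show ?thesis .
qed

end


section \<open>The descendent operation of a Rota-Baxter system\<close>

locale rota_baxter_hopf_system =
  fixes scale :: "'k::field_char_0 \<Rightarrow> 'h::ring_1 \<Rightarrow> 'h"
    and Delta :: "'h \<Rightarrow> ('h \<times> 'h) list" and eps :: "'h \<Rightarrow> 'k"
    and S B1 B2 :: "'h \<Rightarrow> 'h"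
  assumes rota_baxter_system: "rota_baxter_system scale Delta eps S B1 B2"
begin

sublocale cocommutative_hopf_algebra_ring scale Delta eps S
  using rota_baxter_system
  by (simp add: rota_baxter_system_def cocommutative_hopf_algebra_ring_def vector_space_ring_def
      cocommutative_hopf_algebra_ring_axioms_def hopf_algebra_ring_def hopf_algebra_ring_axioms_def)

abbreviation circ :: "'h \<Rightarrow> 'h \<Rightarrow> 'h" where "circ \<equiv> descendent Delta S B1 B2"
abbreviation sigma :: "'h \<Rightarrow> 'h" where "sigma \<equiv> cocycle Delta S B1 B2"
abbreviation T :: "'h \<Rightarrow> 'h" where "T \<equiv> rbs_T Delta S B1 B2"

lemma circ_eq_sweedler: "circ a b = sweedler a (\<lambda>x y. B1 x * b * S (B2 y))"
  by (simp add: descendent_def sweedler_def)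

lemma sigma_eq_sweedler: "sigma a = sweedler a (\<lambda>x y. B1 x * S (B2 y))"
  by (simp add: cocycle_def sweedler_def)

lemma T_eq_sweedler: "T a = sweedler a (\<lambda>x y. S (B1 x) * B2 y)"
  by (simp add: rbs_T_def sweedler_def)

lemma coalgebra_hom_B1: "coalgebra_hom scale Delta eps B1"
  and coalgebra_hom_B2: "coalgebra_hom scale Delta eps B2"
  and B1_one: "B1 1 = 1" and B2_one: "B2 1 = 1"
  and B1_circ: "B1 (circ a b) = B1 a * B1 b" and B2_circ: "B2 (circ a b) = B2 a * B2 b"
  using rota_baxter_system by (simp_all add: rota_baxter_system_def)

lemmas sweedler_B1 = sweedler_coalgebra_hom[OF coalgebra_hom_B1]
  and sweedler_B2 = sweedler_coalgebra_hom[OF coalgebra_hom_B2]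

lemma eps_B1: "eps (B1 a) = eps a" and eps_B2: "eps (B2 a) = eps a"
  using coalgebra_hom_B1 coalgebra_hom_B2 by (simp_all add: coalgebra_hom_def)

lemma linear_op_compose_B1: "linear_op f \<Longrightarrow> linear_op (\<lambda>x. B1 (f x))"
  and linear_op_compose_B2: "linear_op f \<Longrightarrow> linear_op (\<lambda>x. B2 (f x))"
  using linear_op_coalgebra_hom[OF coalgebra_hom_B1] linear_op_coalgebra_hom[OF coalgebra_hom_B2]
  by (simp_all add: linear_op_iff)

lemma linear_op_circ_left: "linear_op f \<Longrightarrow> linear_op (\<lambda>x. circ (f x) b)"
  and linear_op_circ_right: "linear_op f \<Longrightarrow> linear_op (\<lambda>x. circ b (f x))"
  and linear_op_compose_sigma: "linear_op f \<Longrightarrow> linear_op (\<lambda>x. sigma (f x))"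
  and linear_op_compose_T: "linear_op f \<Longrightarrow> linear_op (\<lambda>x. T (f x))"
  unfolding circ_eq_sweedler sigma_eq_sweedler T_eq_sweedler
  by (intro linear_op_intros linear_op_compose_B1 linear_op_compose_B2; assumption)+

lemmas linear_op_rb_intros = linear_op_intros linear_op_compose_B1 linear_op_compose_B2
  linear_op_circ_left linear_op_circ_right linear_op_compose_sigma linear_op_compose_T

lemma sweedler_B1_mult_S_B2:
  assumes F: "bilinear_op F"
  shows "sweedler (B1 x * b * S (B2 y)) F = sweedler x (\<lambda>x1 x2. sweedler y (\<lambda>y1 y2.
    sweedler b (\<lambda>u v. F (B1 x1 * u * S (B2 y1)) (B1 x2 * v * S (B2 y2)))))"
proof -
  note FL = bilinear_op_compose_left[OF F] and FR = bilinear_op_compose_right[OF F]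
  have "sweedler (B1 x * b * S (B2 y)) F =
      sweedler (B1 x * b) (\<lambda>p q. sweedler (S (B2 y)) (\<lambda>r t. F (p * r) (q * t)))"
    by (rule sweedler_mult[OF F])
  also have "\<dots> = sweedler (B1 x) (\<lambda>p1 p2. sweedler b (\<lambda>u v.
      sweedler (S (B2 y)) (\<lambda>r t. F (p1 * u * r) (p2 * v * t))))"
    by (rule sweedler_mult) (intro linear_op_rb_intros FL FR)
  also have "\<dots> = sweedler x (\<lambda>x1 x2. sweedler b (\<lambda>u v.
      sweedler (S (B2 y)) (\<lambda>r t. F (B1 x1 * u * r) (B1 x2 * v * t))))"
    by (rule sweedler_B1) (intro linear_op_rb_intros FL FR)
  also have "\<dots> = sweedler x (\<lambda>x1 x2. sweedler b (\<lambda>u v.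
      sweedler y (\<lambda>y1 y2. F (B1 x1 * u * S (B2 y1)) (B1 x2 * v * S (B2 y2)))))"
    by (intro sweedler_cong trans[OF sweedler_S sweedler_B2]) (intro linear_op_rb_intros FL FR)+
  also have "\<dots> = sweedler x (\<lambda>x1 x2. sweedler y (\<lambda>y1 y2.
      sweedler b (\<lambda>u v. F (B1 x1 * u * S (B2 y1)) (B1 x2 * v * S (B2 y2)))))"
    by (rule sweedler_cong, rule sweedler_swap)
  finally show ?thesis .
qed

text \<open>Cocommutativity makes \<open>\<Delta>\<close> multiplicative for \<open>\<circ>\<close>.\<close>

lemma sweedler_circ:
  assumes F: "bilinear_op F"
  shows "sweedler (circ a b) F = sweedler a (\<lambda>x y. sweedler b (\<lambda>u v. F (circ x u) (circ y v)))"
proof -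
  note FL = bilinear_op_compose_left[OF F] and FR = bilinear_op_compose_right[OF F]
  let ?K = "\<lambda>x1 x2 y1 y2. sweedler b (\<lambda>u v. F (B1 x1 * u * S (B2 y1)) (B1 x2 * v * S (B2 y2)))"
  have "sweedler (circ a b) F = sweedler a (\<lambda>x y. sweedler (B1 x * b * S (B2 y)) F)"
    unfolding circ_eq_sweedler by (rule linear_op_sweedler) (intro linear_op_rb_intros F)
  also have "\<dots> = sweedler a (\<lambda>x y. sweedler x (\<lambda>x1 x2. sweedler y (\<lambda>y1 y2. ?K x1 x2 y1 y2)))"
    by (rule sweedler_cong, rule sweedler_B1_mult_S_B2[OF F])
  also have "\<dots> = sweedler a (\<lambda>x y. sweedler x (\<lambda>x1 x2. sweedler y (\<lambda>y1 y2. ?K x1 y1 x2 y2)))"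
    by (rule sweedler_middle_swap) (intro linear_op_rb_intros FL FR)+
  also have "\<dots> = sweedler a (\<lambda>x y. sweedler b (\<lambda>u v. sweedler x (\<lambda>x1 x2. sweedler y (\<lambda>y1 y2.
      F (B1 x1 * u * S (B2 x2)) (B1 y1 * v * S (B2 y2))))))"
    by (simp only: sweedler_swap[of _ b])
  also have "\<dots> = sweedler a (\<lambda>x y. sweedler b (\<lambda>u v. F (circ x u) (circ y v)))"
    unfolding circ_eq_sweedler by (intro sweedler_cong bilinear_op_sweedler_sweedler[OF F, symmetric])
  finally show ?thesis .
qed


lemma sigma_eq_circ_one: "sigma a = circ a 1"
  by (simp add: sigma_eq_sweedler circ_eq_sweedler)

lemma sweedler_sigma:
  assumes F: "bilinear_op F"
  shows "sweedler (sigma a) F = sweedler a (\<lambda>x y. F (sigma x) (sigma y))"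
  unfolding sigma_eq_circ_one sweedler_circ[OF F]
  by (intro sweedler_cong sweedler_one)
    (intro linear_op_rb_intros bilinear_op_compose_left[OF F] bilinear_op_compose_right[OF F])

lemma B1_sigma: "B1 (sigma a) = B1 a" and B2_sigma: "B2 (sigma a) = B2 a"
  by (simp_all add: sigma_eq_circ_one B1_circ B2_circ B1_one B2_one)

lemma circ_sigma_left: "circ (sigma a) b = circ a b"
proof -
  have "circ (sigma a) b = sweedler a (\<lambda>x y. B1 (sigma x) * b * S (B2 (sigma y)))"
    unfolding circ_eq_sweedler by (rule sweedler_sigma) (intro linear_op_rb_intros)
  then show ?thesis by (simp add: B1_sigma B2_sigma circ_eq_sweedler)
qed

lemma circ_assoc: "circ (circ a b) c = circ a (circ b c)"
proof -
  have "circ (circ a b) c = sweedler a (\<lambda>x y. sweedler b (\<lambda>u v. B1 (circ x u) * c * S (B2 (circ y v))))"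
    unfolding circ_eq_sweedler[of "circ a b"] by (rule sweedler_circ) (intro linear_op_rb_intros)
  also have "\<dots> = sweedler a (\<lambda>x y. B1 x * sweedler b (\<lambda>u v. B1 u * c * S (B2 v)) * S (B2 y))"
    by (simp add: B1_circ B2_circ S_mult sweedler_mult_left[symmetric] sweedler_mult_right[symmetric]
        mult.assoc)
  finally show ?thesis by (simp add: circ_eq_sweedler)
qed

lemma sigma_sigma: "sigma (sigma a) = sigma a"
  by (simp add: sigma_eq_circ_one circ_sigma_left[unfolded sigma_eq_circ_one])

lemma circ_one_left: "circ 1 b = b"
  unfolding circ_eq_sweedler by (subst sweedler_one) (intro linear_op_rb_intros, simp add: B1_one B2_one S_one)

lemma sigma_one: "sigma 1 = 1"
  by (simp add: sigma_eq_circ_one circ_one_left)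

lemma circ_sigma_sigma: "circ (sigma a) (sigma b) = sigma (circ a b)"
  by (simp only: circ_sigma_left) (simp only: sigma_eq_circ_one circ_assoc)

lemma eps_circ: "eps (circ a b) = eps a * eps b"
proof -
  have "scale (eps (circ a b)) (1::'h) = sweedler a (\<lambda>x y. scale (eps (B1 x * b * S (B2 y))) 1)"
    unfolding circ_eq_sweedler by (rule linear_op_sweedler) (intro linear_op_intros)
  also have "\<dots> = scale (eps b) (sweedler a (\<lambda>x y. scale (eps x) 1 * scale (eps y) 1))"
    by (simp add: eps_mult eps_B1 eps_B2 eps_S scale_mult_left sweedler_scale_fun[symmetric] mult_ac)
  finally show ?thesis by (simp add: sweedler_counit_mult mult.commute)
qed

lemma eps_sigma: "eps (sigma a) = eps a"
  by (simp add: sigma_eq_circ_one eps_circ eps_one)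

lemma sweedler_circ_T_right: "sweedler a (\<lambda>x y. circ x (T y)) = scale (eps a) 1"
proof -
  have B2_swapped: "sweedler y (\<lambda>y1 y2. B2 y2 * S (B2 y1)) = scale (eps y) 1" for y
    using sweedler_cocomm[of "\<lambda>y1 y2. B2 y2 * S (B2 y1)" y]
    by (simp add: linear_op_rb_intros sweedler_coalgebra_hom_antipode[OF coalgebra_hom_B2])
  have "sweedler a (\<lambda>x y. circ x (T y)) = sweedler a (\<lambda>x y. sweedler x (\<lambda>x1 x2.
      sweedler y (\<lambda>y1 y2. B1 x1 * (S (B1 y1) * B2 y2) * S (B2 x2))))"
    by (simp add: circ_eq_sweedler T_eq_sweedler sweedler_mult_left sweedler_mult_right)
  also have "\<dots> = sweedler a (\<lambda>x y. sweedler x (\<lambda>x1 x2.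
      sweedler y (\<lambda>y1 y2. B1 x1 * (S (B1 x2) * B2 y2) * S (B2 y1))))"
    by (rule sweedler_middle_swap[where K = "\<lambda>x1 x2 y1 y2. B1 x1 * (S (B1 y1) * B2 y2) * S (B2 x2)",
          simplified]) (intro linear_op_rb_intros)+
  also have "\<dots> = sweedler a (\<lambda>x y.
      sweedler x (\<lambda>x1 x2. B1 x1 * S (B1 x2)) * sweedler y (\<lambda>y1 y2. B2 y2 * S (B2 y1)))"
    by (rule sweedler_cong) (simp only: sweedler_product[symmetric] mult.assoc)
  also have "\<dots> = scale (eps a) 1"
    by (simp add: sweedler_coalgebra_hom_antipode[OF coalgebra_hom_B1] B2_swapped sweedler_counit_mult)
  finally show ?thesis .
qed


text \<open>Both \<open>a \<mapsto> B\<^sub>i(T a)\<close> and \<open>a \<mapsto> S(B\<^sub>i a)\<close> are convolution inverses of \<open>B\<^sub>i\<close>;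
  for the first this is because \<open>B\<^sub>i\<close> turns \<open>\<circ>\<close> into the product.\<close>

lemma multiplicative_coalgebra_hom_T:
  assumes f: "coalgebra_hom scale Delta eps f"
    and f_circ: "\<And>a b. f (circ a b) = f a * f b" and f_one: "f 1 = 1"
  shows "f (T a) = S (f a)"
proof -
  have lin: "linear_op f" by (rule linear_op_coalgebra_hom[OF f])
  have "(\<lambda>a. f (T a)) = (\<lambda>a. S (f a))"
  proof (rule convolution_inverse_unique[where g = f])
    show "sweedler a (\<lambda>x y. f x * f (T y)) = scale (eps a) 1" for a
    proof -
      have "sweedler a (\<lambda>x y. f x * f (T y)) = f (sweedler a (\<lambda>x y. circ x (T y)))"
        by (simp add: f_circ linear_op_sweedler[OF lin])
      then show ?thesis using lin by (simp add: sweedler_circ_T_right linear_op_iff f_one)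
    qed
    show "sweedler a (\<lambda>x y. S (f x) * f y) = scale (eps a) 1" for a
      by (rule sweedler_coalgebra_hom_antipode(1)[OF f])
  qed (use lin linear_op_compose_T[OF linear_op_ident] in
      \<open>simp_all add: linear_op_compose linear_op_compose_S\<close>)
  then show ?thesis by (rule fun_cong)
qed

lemma B1_T: "B1 (T a) = S (B1 a)" and B2_T: "B2 (T a) = S (B2 a)"
  by (simp_all add: multiplicative_coalgebra_hom_T coalgebra_hom_B1 coalgebra_hom_B2
      B1_circ B2_circ B1_one B2_one)

lemma sweedler_T:
  assumes F: "bilinear_op F"
  shows "sweedler (T a) F = sweedler a (\<lambda>x y. F (T x) (T y))"
proof -
  note FL = bilinear_op_compose_left[OF F] and FR = bilinear_op_compose_right[OF F]
  let ?K = "\<lambda>x1 x2 y1 y2. F (S (B1 x1) * B2 y1) (S (B1 x2) * B2 y2)"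
  have "sweedler (T a) F = sweedler a (\<lambda>x y. sweedler (S (B1 x) * B2 y) F)"
    unfolding T_eq_sweedler by (rule linear_op_sweedler) (intro linear_op_rb_intros F)
  also have "\<dots> = sweedler a (\<lambda>x y. sweedler x (\<lambda>x1 x2. sweedler y (\<lambda>y1 y2. ?K x1 x2 y1 y2)))"
    by (simp add: sweedler_mult sweedler_S sweedler_B1 sweedler_B2 F linear_op_rb_intros FL FR)
  also have "\<dots> = sweedler a (\<lambda>x y. sweedler x (\<lambda>x1 x2. sweedler y (\<lambda>y1 y2. ?K x1 y1 x2 y2)))"
    by (rule sweedler_middle_swap) (intro linear_op_rb_intros FL FR)+
  also have "\<dots> = sweedler a (\<lambda>x y. F (T x) (T y))"
    unfolding T_eq_sweedler by (intro sweedler_cong bilinear_op_sweedler_sweedler[OF F, symmetric])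
  finally show ?thesis .
qed

lemma sigma_T: "sigma (T a) = T a"
  unfolding sigma_eq_sweedler
  by (subst sweedler_T) (intro linear_op_rb_intros, simp add: B1_T B2_T S_S flip: T_eq_sweedler)

lemma T_sigma: "T (sigma a) = T a"
  unfolding T_eq_sweedler
  by (subst sweedler_sigma) (intro linear_op_rb_intros, simp add: B1_sigma B2_sigma)

lemma circ_T_left: "circ (T a) b = sweedler a (\<lambda>x y. S (B1 x) * b * B2 y)"
  unfolding circ_eq_sweedler
  by (subst sweedler_T) (intro linear_op_rb_intros, simp add: B1_T B2_T S_S)

lemma sweedler_T_circ_sigma: "sweedler a (\<lambda>x y. circ (T x) (sigma y)) = scale (eps a) 1"
proof -
  have B2_swapped: "sweedler y (\<lambda>y1 y2. S (B2 y2) * B2 y1) = scale (eps y) 1" for y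
    using sweedler_cocomm[of "\<lambda>y1 y2. S (B2 y2) * B2 y1" y]
    by (simp add: linear_op_rb_intros sweedler_coalgebra_hom_antipode[OF coalgebra_hom_B2])
  have "sweedler a (\<lambda>x y. circ (T x) (sigma y)) = sweedler a (\<lambda>x y. sweedler x (\<lambda>x1 x2.
      sweedler y (\<lambda>y1 y2. S (B1 x1) * (B1 y1 * S (B2 y2)) * B2 x2)))"
    by (simp add: circ_T_left sigma_eq_sweedler sweedler_mult_left sweedler_mult_right)
  also have "\<dots> = sweedler a (\<lambda>x y. sweedler x (\<lambda>x1 x2.
      sweedler y (\<lambda>y1 y2. S (B1 x1) * (B1 x2 * S (B2 y2)) * B2 y1)))"
    by (rule sweedler_middle_swap[where K = "\<lambda>x1 x2 y1 y2. S (B1 x1) * (B1 y1 * S (B2 y2)) * B2 x2",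
          simplified]) (intro linear_op_rb_intros)+
  also have "\<dots> = sweedler a (\<lambda>x y.
      sweedler x (\<lambda>x1 x2. S (B1 x1) * B1 x2) * sweedler y (\<lambda>y1 y2. S (B2 y2) * B2 y1))"
    by (rule sweedler_cong) (simp only: sweedler_product[symmetric] mult.assoc)
  also have "\<dots> = scale (eps a) 1"
    by (simp add: sweedler_coalgebra_hom_antipode[OF coalgebra_hom_B1] B2_swapped sweedler_counit_mult)
  finally show ?thesis .
qed


section \<open>The Hopf algebra on the image of the cocycle\<close>

abbreviation H1 :: "'h set" where "H1 \<equiv> range sigma"

lemma mem_H1_iff: "a \<in> H1 \<longleftrightarrow> sigma a = a"
proof
  assume "a \<in> H1"
  then obtain c where "a = sigma c" by blast
  then show "sigma a = a" by (simp only: sigma_sigma)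
next
  assume "sigma a = a"
  then show "a \<in> H1" by (metis rangeI)
qed

lemma subspace_H1: "vs.subspace H1"
proof -
  interpret vector_space_pair scale scale ..
  show ?thesis
    using linear_subspace_image[OF linear_op_compose_sigma[OF linear_op_ident] vs.subspace_UNIV] by simp
qed

lemma one_mem_H1: "1 \<in> H1"
  by (simp add: mem_H1_iff sigma_one)

lemma circ_mem_H1:
  assumes "a \<in> H1" "b \<in> H1"
  shows "circ a b \<in> H1"
proof -
  obtain a' b' where "a = sigma a'" "b = sigma b'" using assms by blast
  then have "circ a b = sigma (circ a' b')" by (simp only: circ_sigma_sigma)
  then show ?thesis by simp
qed

lemma T_mem_H1: "T a \<in> H1"
  by (simp add: mem_H1_iff sigma_T)

lemma circ_one_right_H1: "a \<in> H1 \<Longrightarrow> circ a 1 = a"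
  by (simp only: sigma_eq_circ_one[symmetric] mem_H1_iff)

lemma Delta_H1_representable: "\<forall>a\<in>H1. \<exists>xs. set xs \<subseteq> H1 \<times> H1 \<and> tensor2_eq scale UNIV xs (Delta a)"
proof
  fix a assume "a \<in> H1"
  then obtain c where a: "a = sigma c" by blast
  let ?xs = "map (\<lambda>(x, y). (sigma x, sigma y)) (Delta c)"
  have "tensor2_eq scale UNIV ?xs (Delta a)"
  proof (rule tensor2_eq_subspaceI[OF vs.subspace_UNIV])
    fix F assume "bilinear_op F"
    from sweedler_sigma[OF this, of c]
    show "sum_list (map (\<lambda>(x, y). F x y) ?xs) = sum_list (map (\<lambda>(x, y). F x y) (Delta a))"
      by (simp add: a sweedler_def o_def case_prod_beta')
  qed auto
  moreover have "set ?xs \<subseteq> H1 \<times> H1" by auto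
  ultimately show "\<exists>xs. set xs \<subseteq> H1 \<times> H1 \<and> tensor2_eq scale UNIV xs (Delta a)" by blast
qed

context
  fixes Delta1 :: "'h \<Rightarrow> ('h \<times> 'h) list"
  assumes Delta1: "\<forall>a\<in>H1. set (Delta1 a) \<subseteq> H1 \<times> H1 \<and> tensor2_eq scale UNIV (Delta1 a) (Delta a)"
begin

lemma Delta1_subset: "a \<in> H1 \<Longrightarrow> set (Delta1 a) \<subseteq> H1 \<times> H1"
  using Delta1 by blast

lemma Delta1_mem: "a \<in> H1 \<Longrightarrow> (x, y) \<in> set (Delta1 a) \<Longrightarrow> x \<in> H1 \<and> y \<in> H1"
  using Delta1_subset by blast

lemma sum_Delta1:
  assumes a: "a \<in> H1" and F: "bilinear_op F"
  shows "sum_list (map (\<lambda>(x, y). F x y) (Delta1 a)) = sweedler a F"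
proof -
  have "tensor2_eq scale UNIV (Delta1 a) (Delta a)" using Delta1 a by blast
  from tensor2_eq_sum_bilinear_op[OF this F] show ?thesis by (simp add: sweedler_def)
qed

lemma sum_Delta1_cong:
  assumes "a \<in> H1" "\<And>x y. x \<in> H1 \<Longrightarrow> y \<in> H1 \<Longrightarrow> F x y = G x y"
  shows "sum_list (map (\<lambda>(x, y). F x y) (Delta1 a)) = sum_list (map (\<lambda>(x, y). G x y) (Delta1 a))"
proof -
  have "map (\<lambda>(x, y). F x y) (Delta1 a) = map (\<lambda>(x, y). G x y) (Delta1 a)"
    by (rule map_cong[OF refl]) (use Delta1_subset[OF assms(1)] assms(2) in auto)
  then show ?thesis by (rule arg_cong)
qed


lemma set_concat_Delta1_subset:
  assumes a: "a \<in> H1" and f: "\<And>x y. x \<in> H1 \<Longrightarrow> y \<in> H1 \<Longrightarrow> set (f x y) \<subseteq> A"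
  shows "set (concat (map (\<lambda>(x, y). f x y) (Delta1 a))) \<subseteq> A"
proof
  fix z assume "z \<in> set (concat (map (\<lambda>(x, y). f x y) (Delta1 a)))"
  then obtain x y where "(x, y) \<in> set (Delta1 a)" "z \<in> set (f x y)" by auto
  with f Delta1_mem[OF a] show "z \<in> A" by blast
qed

lemma tensor2_eq_Delta1_add:
  assumes "a \<in> H1" "b \<in> H1"
  shows "tensor2_eq scale H1 (Delta1 (a + b)) (Delta1 a @ Delta1 b)"
proof (rule tensor2_eq_subspaceI[OF subspace_H1])
  have "a + b \<in> H1" using assms subspace_H1 by (simp add: vs.subspace_add)
  then show "set (Delta1 (a + b)) \<subseteq> H1 \<times> H1" by (rule Delta1_subset)
  show "set (Delta1 a @ Delta1 b) \<subseteq> H1 \<times> H1" using assms Delta1_subset by auto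
  fix F assume F: "bilinear_op F"
  show "sum_list (map (\<lambda>(x, y). F x y) (Delta1 (a + b))) =
      sum_list (map (\<lambda>(x, y). F x y) (Delta1 a @ Delta1 b))"
    using \<open>a + b \<in> H1\<close> assms by (simp add: sum_Delta1 F sweedler_add)
qed

lemma tensor2_eq_Delta1_scale:
  assumes a: "a \<in> H1"
  shows "tensor2_eq scale H1 (Delta1 (scale k a)) (map (\<lambda>(x, y). (scale k x, y)) (Delta1 a))"
proof (rule tensor2_eq_subspaceI[OF subspace_H1])
  have ka: "scale k a \<in> H1" using a subspace_H1 by (simp add: vs.subspace_scale)
  then show "set (Delta1 (scale k a)) \<subseteq> H1 \<times> H1" by (rule Delta1_subset)
  show "set (map (\<lambda>(x, y). (scale k x, y)) (Delta1 a)) \<subseteq> H1 \<times> H1"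
    using Delta1_subset[OF a] subspace_H1 by (auto simp: vs.subspace_scale)
  fix F assume F: "bilinear_op F"
  have "sum_list (map (\<lambda>(x, y). F x y) (map (\<lambda>(x, y). (scale k x, y)) (Delta1 a))) =
      scale k (sum_list (map (\<lambda>(x, y). F x y) (Delta1 a)))"
    using F by (simp add: o_def case_prod_beta' bilinear_op_def linear_op_iff sum_list_scale_right)
  then show "sum_list (map (\<lambda>(x, y). F x y) (Delta1 (scale k a))) =
      sum_list (map (\<lambda>(x, y). F x y) (map (\<lambda>(x, y). (scale k x, y)) (Delta1 a)))"
    using ka a by (simp add: sum_Delta1 F sweedler_scale)
qed

lemma tensor3_eq_Delta1_coassoc:
  assumes a: "a \<in> H1"
  shows "tensor3_eq scale H1
    (concat (map (\<lambda>(x, y). map (\<lambda>(u, v). (u, v, y)) (Delta1 x)) (Delta1 a)))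
    (concat (map (\<lambda>(x, y). map (\<lambda>(u, v). (x, u, v)) (Delta1 y)) (Delta1 a)))"
proof (rule tensor3_eq_subspaceI[OF subspace_H1])
  show "set (concat (map (\<lambda>(x, y). map (\<lambda>(u, v). (u, v, y)) (Delta1 x)) (Delta1 a))) \<subseteq> H1 \<times> H1 \<times> H1"
    by (rule set_concat_Delta1_subset[OF a]) (use Delta1_subset in auto)
  show "set (concat (map (\<lambda>(x, y). map (\<lambda>(u, v). (x, u, v)) (Delta1 y)) (Delta1 a))) \<subseteq> H1 \<times> H1 \<times> H1"
    by (rule set_concat_Delta1_subset[OF a]) (use Delta1_subset in auto)
  fix G assume G: "trilinear_op G"
  have lin: "linear_op (\<lambda>x. G x y z)" "linear_op (\<lambda>y. G x y z)" "linear_op (\<lambda>z. G x y z)" for x y z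
    using G by (auto simp: trilinear_op_def)
  have "sum_list (map (\<lambda>(x, y, z). G x y z)
      (concat (map (\<lambda>(x, y). map (\<lambda>(u, v). (u, v, y)) (Delta1 x)) (Delta1 a)))) =
      sum_list (map (\<lambda>(x, y). sum_list (map (\<lambda>(u, v). G u v y) (Delta1 x))) (Delta1 a))"
    by (simp add: sum_list_concat_map o_def case_prod_beta')
  also have "\<dots> = sweedler a (\<lambda>x y. sweedler x (\<lambda>u v. G u v y))"
    using a by (simp add: sum_Delta1_cong[OF a] sum_Delta1 bilinear_opI lin linear_op_intros)
  also have "\<dots> = sweedler a (\<lambda>x y. sweedler y (G x))"
    by (rule sweedler_coassoc[OF G])
  also have "\<dots> = sum_list (map (\<lambda>(x, y). sum_list (map (\<lambda>(u, v). G x u v) (Delta1 y))) (Delta1 a))"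
    using a by (simp add: sum_Delta1_cong[OF a] sum_Delta1 bilinear_opI lin linear_op_intros)
  also have "\<dots> = sum_list (map (\<lambda>(x, y, z). G x y z)
      (concat (map (\<lambda>(x, y). map (\<lambda>(u, v). (x, u, v)) (Delta1 y)) (Delta1 a))))"
    by (simp add: sum_list_concat_map o_def case_prod_beta')
  finally show "sum_list (map (\<lambda>(x, y, z). G x y z)
      (concat (map (\<lambda>(x, y). map (\<lambda>(u, v). (u, v, y)) (Delta1 x)) (Delta1 a)))) =
    sum_list (map (\<lambda>(x, y, z). G x y z)
      (concat (map (\<lambda>(x, y). map (\<lambda>(u, v). (x, u, v)) (Delta1 y)) (Delta1 a))))" .
qed


lemma tensor2_eq_Delta1_circ:
  assumes a: "a \<in> H1" and b: "b \<in> H1"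
  shows "tensor2_eq scale H1 (Delta1 (circ a b))
    (concat (map (\<lambda>(x, y). map (\<lambda>(u, v). (circ x u, circ y v)) (Delta1 b)) (Delta1 a)))"
proof (rule tensor2_eq_subspaceI[OF subspace_H1])
  show "set (Delta1 (circ a b)) \<subseteq> H1 \<times> H1"
    by (rule Delta1_subset[OF circ_mem_H1[OF a b]])
  show "set (concat (map (\<lambda>(x, y). map (\<lambda>(u, v). (circ x u, circ y v)) (Delta1 b)) (Delta1 a))) \<subseteq> H1 \<times> H1"
    by (rule set_concat_Delta1_subset[OF a]) (use Delta1_subset[OF b] circ_mem_H1 in auto)
  fix F assume F: "bilinear_op F"
  note FL = bilinear_op_compose_left[OF F] and FR = bilinear_op_compose_right[OF F]
  have "sum_list (map (\<lambda>(x, y). F x y)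
      (concat (map (\<lambda>(x, y). map (\<lambda>(u, v). (circ x u, circ y v)) (Delta1 b)) (Delta1 a)))) =
      sum_list (map (\<lambda>(x, y). sum_list (map (\<lambda>(u, v). F (circ x u) (circ y v)) (Delta1 b))) (Delta1 a))"
    by (simp add: sum_list_concat_map o_def case_prod_beta')
  also have "\<dots> = sweedler a (\<lambda>x y. sweedler b (\<lambda>u v. F (circ x u) (circ y v)))"
    using a b by (simp add: sum_Delta1 linear_op_rb_intros FL FR)
  also have "\<dots> = sum_list (map (\<lambda>(x, y). F x y) (Delta1 (circ a b)))"
    by (simp add: sum_Delta1 circ_mem_H1 a b F sweedler_circ)
  finally show "sum_list (map (\<lambda>(x, y). F x y) (Delta1 (circ a b))) =
      sum_list (map (\<lambda>(x, y). F x y)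
        (concat (map (\<lambda>(x, y). map (\<lambda>(u, v). (circ x u, circ y v)) (Delta1 b)) (Delta1 a))))" ..
qed

lemma tensor2_eq_Delta1_one: "tensor2_eq scale H1 (Delta1 1) [(1, 1)]"
  by (rule tensor2_eq_subspaceI[OF subspace_H1])
    (simp_all add: Delta1_subset one_mem_H1 sum_Delta1 sweedler_one)

lemma Delta1_counit:
  assumes "a \<in> H1"
  shows "sum_list (map (\<lambda>(x, y). scale (eps x) y) (Delta1 a)) = a"
    and "sum_list (map (\<lambda>(x, y). scale (eps y) x) (Delta1 a)) = a"
  using assms by (simp_all add: sum_Delta1 linear_op_intros sweedler_counit_left sweedler_counit_right)

lemma Delta1_antipode:
  assumes "a \<in> H1"
  shows "sum_list (map (\<lambda>(x, y). circ (T x) y) (Delta1 a)) = scale (eps a) 1"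
    and "sum_list (map (\<lambda>(x, y). circ x (T y)) (Delta1 a)) = scale (eps a) 1"
proof -
  obtain c where c: "a = sigma c" using assms by blast
  have "sum_list (map (\<lambda>(x, y). circ (T x) y) (Delta1 a)) = sweedler c (\<lambda>x y. circ (T (sigma x)) (sigma y))"
    using assms by (simp add: sum_Delta1 c sweedler_sigma linear_op_rb_intros)
  then show "sum_list (map (\<lambda>(x, y). circ (T x) y) (Delta1 a)) = scale (eps a) 1"
    by (simp add: T_sigma sweedler_T_circ_sigma c eps_sigma)
  have "sum_list (map (\<lambda>(x, y). circ x (T y)) (Delta1 a)) = sweedler c (\<lambda>x y. circ (sigma x) (T (sigma y)))"
    using assms by (simp add: sum_Delta1 c sweedler_sigma linear_op_rb_intros)
  then show "sum_list (map (\<lambda>(x, y). circ x (T y)) (Delta1 a)) = scale (eps a) 1"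
    by (simp add: T_sigma circ_sigma_left sweedler_circ_T_right c eps_sigma)
qed

lemma tensor2_eq_Delta1_swap:
  assumes a: "a \<in> H1"
  shows "tensor2_eq scale H1 (Delta1 a) (map (\<lambda>(x, y). (y, x)) (Delta1 a))"
proof (rule tensor2_eq_subspaceI[OF subspace_H1])
  show "set (Delta1 a) \<subseteq> H1 \<times> H1" by (rule Delta1_subset[OF a])
  then show "set (map (\<lambda>(x, y). (y, x)) (Delta1 a)) \<subseteq> H1 \<times> H1" by auto
  fix F assume F: "bilinear_op F"
  then have F': "bilinear_op (\<lambda>x y. F y x)" by (simp add: bilinear_op_def)
  show "sum_list (map (\<lambda>(x, y). F x y) (Delta1 a)) =
      sum_list (map (\<lambda>(x, y). F x y) (map (\<lambda>(x, y). (y, x)) (Delta1 a)))"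
    using sum_Delta1[OF a F] sum_Delta1[OF a F'] sweedler_cocomm[OF F, of a]
    by (simp add: o_def case_prod_beta')
qed

lemma hopf_algebra_on_H1: "hopf_algebra_on scale H1 circ 1 Delta1 eps T"
  unfolding hopf_algebra_on_def
proof (intro conjI ballI allI)
  show "subspace_on scale H1"
    using subspace_H1 by (simp add: subspace_on_def vs.subspace_def)
  show "linear_functional_on scale H1 eps"
    by (simp add: linear_functional_on_def eps_add eps_scale)
  show "linear_map_on scale H1 T"
    using linear_op_compose_T[OF linear_op_ident] T_mem_H1 by (simp add: linear_map_on_def linear_op_iff)
  fix a assume a: "a \<in> H1"
  show "circ a 1 = a" by (rule circ_one_right_H1[OF a])
  show "tensor3_eq scale H1
      (concat (map (\<lambda>(x, y). map (\<lambda>(u, v). (u, v, y)) (Delta1 x)) (Delta1 a)))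
      (concat (map (\<lambda>(x, y). map (\<lambda>(u, v). (x, u, v)) (Delta1 y)) (Delta1 a)))"
    by (rule tensor3_eq_Delta1_coassoc[OF a])
  fix b assume b: "b \<in> H1"
  show "circ (scale k a) b = scale k (circ a b)" "circ a (scale k b) = scale k (circ a b)" for k
    using linear_op_circ_left[OF linear_op_ident, of b] linear_op_circ_right[OF linear_op_ident, of a]
    by (simp_all add: linear_op_iff)
  fix c assume c: "c \<in> H1"
  show "circ (a + b) c = circ a c + circ b c" "circ a (b + c) = circ a b + circ a c"
    using linear_op_circ_left[OF linear_op_ident, of c] linear_op_circ_right[OF linear_op_ident, of a]
    by (simp_all add: linear_op_iff)
qed (simp_all add: one_mem_H1 circ_mem_H1 Delta1_subset circ_one_left circ_assoc eps_circ eps_one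
    Delta1_counit Delta1_antipode tensor2_eq_Delta1_add tensor2_eq_Delta1_scale tensor2_eq_Delta1_circ tensor2_eq_Delta1_one)

lemma cocommutative_on_H1: "cocommutative_on scale H1 Delta1"
  by (simp add: cocommutative_on_def tensor2_eq_Delta1_swap)

end

end

theorem mainTheorem1:
  fixes scale :: "'k::field_char_0 \<Rightarrow> 'h::ring_1 \<Rightarrow> 'h"
    and Delta :: "'h \<Rightarrow> ('h \<times> 'h) list" and eps :: "'h \<Rightarrow> 'k"
    and S B1 B2 :: "'h \<Rightarrow> 'h"
  assumes "rota_baxter_system scale Delta eps S B1 B2"
  defines "H1 \<equiv> range (cocycle Delta S B1 B2)"
  shows "(\<forall>a\<in>H1. \<exists>xs. set xs \<subseteq> H1 \<times> H1 \<and> tensor2_eq scale UNIV xs (Delta a)) \<and>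
         (\<forall>Delta1. (\<forall>a\<in>H1. set (Delta1 a) \<subseteq> H1 \<times> H1 \<and> tensor2_eq scale UNIV (Delta1 a) (Delta a)) \<longrightarrow>
            hopf_algebra_on scale H1 (descendent Delta S B1 B2) 1 Delta1 eps (rbs_T Delta S B1 B2) \<and>
            cocommutative_on scale H1 Delta1)"
proof -
  interpret rota_baxter_hopf_system scale Delta eps S B1 B2
    by unfold_locales (fact assms(1))
  show ?thesis
    unfolding H1_def
    using Delta_H1_representable hopf_algebra_on_H1 cocommutative_on_H1 by blast
qed

end
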